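(* Let $A=\mathbb{Z}$ and let $g\in G_a$ be covered by $\widehat g\in\widehat G_a$. Suppose $g$ has a periodic point $x$ of period $q$. Then: (1) $\widehat{\mathrm{rot}}_{x,\alpha}(\widehat g)$ exists and equals $n/q$ for some $n\in\mathbb{Z}$. (2) If the function $y\mapsto\rho_{y,\alpha}(\widehat g)$ is measurable, then there exists a $g$-invariant Borel probability measure $\mu$ on $X$ such that $\widehat{\mathrm{rot}}_{\mu,\alpha}(\widehat g)=n/q$ for some $n\in\mathbb{Z}$.
   Context: $X$ is a path-connected space, $a\in\mathrm{H}^1(X;\mathbb{Z})$, $\pi\colon\widehat X_a\to X$ a principal $\mathbb{Z}$-bundle with holonomy $a$, $T_r$ the action of $r\in\mathbb{Z}$. $\widehat G_a$ is the group of bundle automorphisms of $\widehat X_a$ (homeomorphisms $\widehat g$ with $\pi\circ\widehat g=g\circ\pi$ for a homeomorphism $g$ of $X$, said to cover $g$), and $G_a$ the group of homeomorphisms of $X$ preserving $a$. $\alpha$ is a real singular $1$-cocycle representing $a$, and $\theta\colon\widehat X_a\to\mathbb{R}$ a $0$-cochain with $d\theta=\pi^*\alpha$ and $\theta(T_r\widehat y)=\theta(\widehat y)+r$. For $y\in X$, $\rho_{y,\alpha}(\widehat g)=\theta(\widehat g(\widehat y))-\theta(\widehat y)$ with $\widehat y\in\pi^{-1}(y)$ (independent of choices); $\widehat{\mathrm{rot}}_{y,\alpha}(\widehat g)=\lim_{n\to\infty}\rho_{y,\alpha}(\widehat g^n)/n$ when it exists; for a $g$-invariant Borel probability measure $\mu$,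 $\widehat{\mathrm{rot}}_{\mu,\alpha}(\widehat g)=\int_X\rho_{y,\alpha}(\widehat g)\,d\mu(y)$. *)

theory Defs
  imports "HOL-Homology.Homology" "HOL-Probability.Probability"
begin

definition vtx :: "nat \<Rightarrow> nat \<Rightarrow> real" where
  "vtx i = (\<lambda>j. if j = i then 1 else 0)"

text \<open>Coboundary of a 0-cochain f (function on points = 0-simplices), evaluated on a
  singular 1-simplex s: f(s e1) - f(s e0).\<close>
definition cobdry0 :: "('a \<Rightarrow> 'r::ab_group_add) \<Rightarrow> ((nat \<Rightarrow> real) \<Rightarrow> 'a) \<Rightarrow> 'r" where
  "cobdry0 f s = f (s (vtx 1)) - f (s (vtx 0))"

definition cocycle1 :: "'a topology \<Rightarrow> (((nat \<Rightarrow> real) \<Rightarrow> 'a) \<Rightarrow> 'r::ab_group_add) \<Rightarrow> bool" where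
  "cocycle1 X c \<longleftrightarrow> (\<forall>t. singular_simplex 2 X t \<longrightarrow>
      c (singular_face 2 0 t) - c (singular_face 2 1 t) + c (singular_face 2 2 t) = 0)"

definition pullback1 :: "('b \<Rightarrow> 'a) \<Rightarrow> (((nat \<Rightarrow> real) \<Rightarrow> 'a) \<Rightarrow> 'r) \<Rightarrow> ((nat \<Rightarrow> real) \<Rightarrow> 'b) \<Rightarrow> 'r" where
  "pullback1 h c s = c (restrict (h \<circ> s) (standard_simplex 1))"

definition path_simplex :: "(real \<Rightarrow> 'a) \<Rightarrow> (nat \<Rightarrow> real) \<Rightarrow> 'a" where
  "path_simplex \<gamma> = restrict (\<lambda>x. \<gamma> (x 1)) (standard_simplex 1)"

definition principal_Z_bundle ::
  "'b topology \<Rightarrow> 'a topology \<Rightarrow> ('b \<Rightarrow> 'a) \<Rightarrow> (int \<Rightarrow> 'b \<Rightarrow> 'b) \<Rightarrow> bool" where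
  "principal_Z_bundle Xh X p T \<longleftrightarrow>
     continuous_map Xh X p \<and> p ` topspace Xh = topspace X \<and>
     (\<forall>r. homeomorphic_map Xh Xh (T r)) \<and>
     (\<forall>y\<in>topspace Xh. T 0 y = y \<and> (\<forall>r s. T (r + s) y = T r (T s y)) \<and> (\<forall>r. p (T r y) = p y)) \<and>
     (\<forall>x\<in>topspace X. \<exists>U \<phi>. openin X U \<and> x \<in> U \<and>
        homeomorphic_map (subtopology Xh {y\<in>topspace Xh. p y \<in> U})
           (prod_topology (subtopology X U) (discrete_topology (UNIV::int set))) \<phi> \<and>
        (\<forall>y\<in>topspace Xh. p y \<in> U \<longrightarrow> fst (\<phi> y) = p y \<and>
            (\<forall>r. \<phi> (T r y) = (fst (\<phi> y), snd (\<phi> y) + r))))"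

text \<open>The class a in H^1(X;Z), given by an integer cocycle acoc, is the holonomy of the
  bundle: every lift of a loop gamma ends at T (a(gamma)) of its start.\<close>
definition has_holonomy ::
  "'b topology \<Rightarrow> 'a topology \<Rightarrow> ('b \<Rightarrow> 'a) \<Rightarrow> (int \<Rightarrow> 'b \<Rightarrow> 'b) \<Rightarrow> (((nat \<Rightarrow> real) \<Rightarrow> 'a) \<Rightarrow> int) \<Rightarrow> bool" where
  "has_holonomy Xh X p T acoc \<longleftrightarrow>
     (\<forall>\<gamma> \<gamma>h. pathin X \<gamma> \<and> \<gamma> 0 = \<gamma> 1 \<and> pathin Xh \<gamma>h \<and> (\<forall>t\<in>{0..1}. p (\<gamma>h t) = \<gamma> t)
        \<longrightarrow> \<gamma>h 1 = T (acoc (path_simplex \<gamma>)) (\<gamma>h 0))"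

definition represents :: "'a topology \<Rightarrow> (((nat \<Rightarrow> real) \<Rightarrow> 'a) \<Rightarrow> real) \<Rightarrow> (((nat \<Rightarrow> real) \<Rightarrow> 'a) \<Rightarrow> int) \<Rightarrow> bool" where
  "represents X \<alpha> acoc \<longleftrightarrow> cocycle1 X \<alpha> \<and>
     (\<exists>f::'a \<Rightarrow> real. \<forall>s. singular_simplex 1 X s \<longrightarrow> \<alpha> s = real_of_int (acoc s) + cobdry0 f s)"

text \<open>g in G_a: homeomorphism of X with g^* a = a in H^1(X;Z).\<close>
definition preserves_class :: "'a topology \<Rightarrow> ('a \<Rightarrow> 'a) \<Rightarrow> (((nat \<Rightarrow> real) \<Rightarrow> 'a) \<Rightarrow> int) \<Rightarrow> bool" where
  "preserves_class X g acoc \<longleftrightarrow> homeomorphic_map X X g \<and>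
     (\<exists>h::'a \<Rightarrow> int. \<forall>s. singular_simplex 1 X s \<longrightarrow> pullback1 g acoc s = acoc s + cobdry0 h s)"

definition covers :: "'b topology \<Rightarrow> ('b \<Rightarrow> 'a) \<Rightarrow> (int \<Rightarrow> 'b \<Rightarrow> 'b) \<Rightarrow> ('b \<Rightarrow> 'b) \<Rightarrow> ('a \<Rightarrow> 'a) \<Rightarrow> bool" where
  "covers Xh p T gh g \<longleftrightarrow> homeomorphic_map Xh Xh gh \<and>
     (\<forall>y\<in>topspace Xh. p (gh y) = g (p y) \<and> (\<forall>r. gh (T r y) = T r (gh y)))"

text \<open>rho_{y,alpha}(gh) = theta(gh(yh)) - theta(yh), yh any point over y.\<close>
definition rho :: "'b topology \<Rightarrow> ('b \<Rightarrow> 'a) \<Rightarrow> ('b \<Rightarrow> real) \<Rightarrow> ('b \<Rightarrow> 'b) \<Rightarrow> 'a \<Rightarrow> real" where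
  "rho Xh p \<theta> gh y = (let yh = (SOME yh. yh \<in> topspace Xh \<and> p yh = y) in \<theta> (gh yh) - \<theta> yh)"

definition borel_of :: "'a topology \<Rightarrow> 'a measure" where
  "borel_of X = sigma (topspace X) {U. openin X U}"

end

theory Submission
  imports Defs
begin

(*
  Lift the periodic point x to xh.  Since g^q fixes x, the map gh^q sends xh into its own
  fibre, i.e. to T k xh for an integer k, and the equivariance of theta gives
  rho_x(gh^q) = k.  The displacement rho is a cocycle over g,
  rho_y(gh^(m+n)) = rho_(g^n y)(gh^m) + rho_y(gh^n), so along the periodic orbit
  rho_x(gh^m) grows by exactly k every q steps, whence rho_x(gh^m)/m tends to k/q.
  The uniform probability on the orbit x, g x, ..., g^(q-1) x is g-invariant, and by the
  cocycle identity the integral of rho(gh) against it is rho_x(gh^q)/q = k/q.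
*)

lemma principal_Z_bundle_image:
  assumes "principal_Z_bundle Xh X p T"
  shows "p ` topspace Xh = topspace X"
  using assms unfolding principal_Z_bundle_def by (elim conjE)

lemma principal_Z_bundle_lift_exists:
  assumes "principal_Z_bundle Xh X p T" and "x \<in> topspace X"
  obtains xh where "xh \<in> topspace Xh" and "p xh = x"
  using principal_Z_bundle_image[OF assms(1)] assms(2) by (metis imageE)

lemma principal_Z_bundle_action:
  assumes "principal_Z_bundle Xh X p T" and "y \<in> topspace Xh"
  shows "T r y \<in> topspace Xh" and "p (T r y) = p y" and "T 0 y = y"
proof -
  have "homeomorphic_map Xh Xh (T r)"
    using assms(1) unfolding principal_Z_bundle_def by (elim conjE) simp
  then show "T r y \<in> topspace Xh"
    using assms(2) by (metis homeomorphic_imp_surjective_map image_eqI)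
  have "\<forall>y\<in>topspace Xh. T 0 y = y \<and> (\<forall>r s. T (r + s) y = T r (T s y)) \<and> (\<forall>r. p (T r y) = p y)"
    using assms(1) unfolding principal_Z_bundle_def by (elim conjE)
  then show "p (T r y) = p y" and "T 0 y = y"
    using assms(2) by simp_all
qed

lemma principal_Z_bundle_local_chart:
  assumes "principal_Z_bundle Xh X p T" and "x \<in> topspace X"
  obtains U \<phi> where "x \<in> U" and "inj_on \<phi> {w\<in>topspace Xh. p w \<in> U}"
    and "\<And>w r. w \<in> topspace Xh \<Longrightarrow> p w \<in> U \<Longrightarrow> \<phi> (T r w) = (p w, snd (\<phi> w) + r)"
proof -
  have "\<forall>x\<in>topspace X. \<exists>U \<phi>. openin X U \<and> x \<in> U \<and>
        homeomorphic_map (subtopology Xh {w\<in>topspace Xh. p w \<in> U})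
           (prod_topology (subtopology X U) (discrete_topology (UNIV::int set))) \<phi> \<and>
        (\<forall>w\<in>topspace Xh. p w \<in> U \<longrightarrow> fst (\<phi> w) = p w \<and>
            (\<forall>r. \<phi> (T r w) = (fst (\<phi> w), snd (\<phi> w) + r)))"
    using assms(1) unfolding principal_Z_bundle_def by (elim conjE)
  then obtain U \<phi> where "x \<in> U"
    and chart: "homeomorphic_map (subtopology Xh {w\<in>topspace Xh. p w \<in> U})
           (prod_topology (subtopology X U) (discrete_topology (UNIV::int set))) \<phi>"
    and chart_equivariant: "\<forall>w\<in>topspace Xh. p w \<in> U \<longrightarrow> fst (\<phi> w) = p w \<and>
            (\<forall>r. \<phi> (T r w) = (fst (\<phi> w), snd (\<phi> w) + r))"
    using assms(2) by blast
  moreover have "inj_on \<phi> {w\<in>topspace Xh. p w \<in> U}"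
    using homeomorphic_imp_injective_map[OF chart] by (simp add: Int_absorb1)
  ultimately show thesis
    using that by simp
qed

lemma principal_Z_bundle_fibre_eq_orbit:
  assumes principal: "principal_Z_bundle Xh X p T"
    and y_in: "y \<in> topspace Xh" and z_in: "z \<in> topspace Xh" and same_fibre: "p y = p z"
  obtains r where "z = T r y"
proof -
  have "p y \<in> topspace X"
    using principal_Z_bundle_image[OF principal] y_in by blast
  then obtain U \<phi> where U: "p y \<in> U" and inj: "inj_on \<phi> {w\<in>topspace Xh. p w \<in> U}"
    and chart: "\<And>w r. w \<in> topspace Xh \<Longrightarrow> p w \<in> U \<Longrightarrow> \<phi> (T r w) = (p w, snd (\<phi> w) + r)"
    by (rule principal_Z_bundle_local_chart[OF principal]) blast
  define r where "r = snd (\<phi> z) - snd (\<phi> y)"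
  have "\<phi> (T r y) = \<phi> (T 0 z)"
    using chart y_in z_in same_fibre U unfolding r_def by simp
  then have "T r y = z"
    using inj principal_Z_bundle_action[OF principal] y_in z_in same_fibre U
    unfolding inj_on_def by auto
  then show thesis using that by blast
qed

lemma covers_in_topspace:
  assumes "covers Xh p T gh g" and "y \<in> topspace Xh"
  shows "gh y \<in> topspace Xh"
  using assms unfolding covers_def by (metis homeomorphic_imp_surjective_map image_eqI)

lemma covers_projection:
  assumes "covers Xh p T gh g" and "y \<in> topspace Xh"
  shows "p (gh y) = g (p y)"
  using assms unfolding covers_def by blast

lemma covers_id: "covers Xh p T id id"
  by (simp add: covers_def)

lemma covers_compose:
  assumes "covers Xh p T gh g" and "covers Xh p T gh' g'"
  shows "covers Xh p T (gh \<circ> gh') (g \<circ> g')"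
  using assms covers_in_topspace[OF assms(2)] unfolding covers_def
  by (auto intro: homeomorphic_map_compose)

lemma covers_funpow:
  assumes "covers Xh p T gh g"
  shows "covers Xh p T (gh ^^ n) (g ^^ n)"
proof (induction n)
  case 0
  show ?case by (simp only: funpow.simps(1) covers_id)
next
  case (Suc n)
  show ?case using covers_compose[OF assms Suc.IH] by (simp only: funpow.simps(2))
qed

locale Z_bundle_coordinate =
  fixes Xh :: "'b topology" and X :: "'a topology" and p :: "'b \<Rightarrow> 'a"
    and T :: "int \<Rightarrow> 'b \<Rightarrow> 'b" and \<theta> :: "'b \<Rightarrow> real"
  assumes principal: "principal_Z_bundle Xh X p T"
    and coordinate_shift: "\<forall>y\<in>topspace Xh. \<forall>r. \<theta> (T r y) = \<theta> y + real_of_int r"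
begin

abbreviation \<rho> where "\<rho> \<equiv> rho Xh p \<theta>"

lemma rho_eq_lift:
  assumes cover: "covers Xh p T gh g" and yh: "yh \<in> topspace Xh"
  shows "\<rho> gh (p yh) = \<theta> (gh yh) - \<theta> yh"
proof -
  define y0 where "y0 = (SOME z. z \<in> topspace Xh \<and> p z = p yh)"
  have y0: "y0 \<in> topspace Xh" "p y0 = p yh"
    unfolding y0_def by (metis (mono_tags, lifting) someI yh)+
  then obtain r where r: "yh = T r y0"
    using principal_Z_bundle_fibre_eq_orbit[OF principal _ yh] by metis
  have "gh yh = T r (gh y0)"
    using cover y0 r unfolding covers_def by auto
  then have "\<theta> (gh yh) - \<theta> yh = \<theta> (gh y0) - \<theta> y0"
    using coordinate_shift covers_in_topspace[OF cover] y0 r by auto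
  then show ?thesis unfolding rho_def Let_def y0_def[symmetric] by simp
qed

lemma rho_id: "\<rho> id y = 0"
  by (simp add: rho_def Let_def)

lemma rho_compose:
  assumes cover: "covers Xh p T gh g" and cover': "covers Xh p T gh' g'"
    and y: "y \<in> topspace X"
  shows "\<rho> (gh \<circ> gh') y = \<rho> gh (g' y) + \<rho> gh' y"
proof -
  obtain yh where yh: "yh \<in> topspace Xh" "p yh = y"
    by (rule principal_Z_bundle_lift_exists[OF principal y])
  have "p (gh' yh) = g' y"
    using covers_projection[OF cover' yh(1)] yh(2) by simp
  then show ?thesis
    using rho_eq_lift[OF covers_compose[OF cover cover'] yh(1)]
      rho_eq_lift[OF cover covers_in_topspace[OF cover' yh(1)]]
      rho_eq_lift[OF cover' yh(1)] yh(2)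
    by simp
qed

lemma rho_funpow_add:
  assumes cover: "covers Xh p T gh g" and y: "y \<in> topspace X"
  shows "\<rho> (gh ^^ (m + n)) y = \<rho> (gh ^^ m) ((g ^^ n) y) + \<rho> (gh ^^ n) y"
  unfolding funpow_add by (rule rho_compose[OF covers_funpow[OF cover] covers_funpow[OF cover] y])

lemma sum_rho_orbit:
  assumes cover: "covers Xh p T gh g" and y: "y \<in> topspace X"
  shows "(\<Sum>i<n. \<rho> gh ((g ^^ i) y)) = \<rho> (gh ^^ n) y"
proof (induction n)
  case 0
  then show ?case by (simp add: rho_id flip: id_def)
next
  case (Suc n)
  then show ?case
    using rho_funpow_add[OF cover y, of 1 n] by (simp add: comp_def)
qed

lemma rho_periodic_point_in_Ints:
  assumes cover: "covers Xh p T gh g"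
    and x: "x \<in> topspace X" and periodic: "(g ^^ q) x = x"
  shows "\<rho> (gh ^^ q) x \<in> \<int>"
proof -
  obtain xh where xh: "xh \<in> topspace Xh" "p xh = x"
    by (rule principal_Z_bundle_lift_exists[OF principal x])
  have "p xh = p ((gh ^^ q) xh)"
    using covers_projection[OF covers_funpow[OF cover] xh(1)] xh(2) periodic by simp
  then obtain k where "(gh ^^ q) xh = T k xh"
    by (rule principal_Z_bundle_fibre_eq_orbit[OF principal xh(1)
          covers_in_topspace[OF covers_funpow[OF cover] xh(1)]])
  then have "\<rho> (gh ^^ q) x = real_of_int k"
    using rho_eq_lift[OF covers_funpow[OF cover] xh(1)] coordinate_shift xh by simp
  then show ?thesis by simp
qed

end

lemma LIMSEQ_div_of_periodic_increment:
  fixes s :: "nat \<Rightarrow> real"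
  assumes "q > 0" and shift: "\<And>m. s (m + q) = s m + c"
  shows "(\<lambda>m. s m / real m) \<longlonglongrightarrow> c / real q"
proof -
  define d where "d m = s m - real m * c / real q" for m
  have "d (r + j * q) = d r" for r j
  proof (induction j)
    case (Suc j)
    have "d (r + Suc j * q) = d (r + j * q)"
      using shift[of "r + j * q"] \<open>q > 0\<close> by (simp add: d_def field_simps)
    with Suc show ?case by simp
  qed simp
  then have d_mod: "d m = d (m mod q)" for m
    by (metis mod_div_mult_eq)
  define B where "B = Max ((\<lambda>r. \<bar>d r\<bar>) ` {..<q})"
  have d_bound: "\<bar>d m\<bar> \<le> B" for m
    unfolding B_def d_mod[of m] using \<open>q > 0\<close> by (intro Max_ge) auto
  have "(\<lambda>m. d m / real m) \<longlonglongrightarrow> 0"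
  proof (rule Lim_null_comparison)
    show "\<forall>\<^sub>F m in sequentially. norm (d m / real m) \<le> B / real m"
      using d_bound by (auto simp: divide_right_mono)
  qed (rule lim_const_over_n)
  then have lim: "(\<lambda>m. c / real q + d m / real m) \<longlonglongrightarrow> c / real q"
    using tendsto_add_const_iff by (metis add.right_neutral)
  have ev: "\<forall>\<^sub>F m in sequentially. c / real q + d m / real m = s m / real m"
    using eventually_gt_at_top[of 0] by eventually_elim (simp add: d_def field_simps)
  show ?thesis
    using tendsto_cong[OF ev] lim by simp
qed

lemma opens_subset_Pow_topspace: "{U. openin X U} \<subseteq> Pow (topspace X)"
  by (auto dest: openin_subset)

lemma space_borel_of: "space (borel_of X) = topspace X"
  unfolding borel_of_def by (rule space_measure_of[OF opens_subset_Pow_topspace])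

lemma openin_in_sets_borel_of:
  assumes "openin X U"
  shows "U \<in> sets (borel_of X)"
  using assms sets_measure_of[OF opens_subset_Pow_topspace] unfolding borel_of_def by auto

lemma measurable_borel_of_continuous_map:
  assumes "continuous_map X Y f"
  shows "f \<in> borel_of X \<rightarrow>\<^sub>M borel_of Y"
  unfolding borel_of_def[of Y]
proof (rule measurable_measure_of[OF opens_subset_Pow_topspace])
  show "f \<in> space (borel_of X) \<rightarrow> topspace Y"
    using assms by (auto simp: space_borel_of continuous_map_def)
  fix U assume "U \<in> {U. openin Y U}"
  then have "openin X {y \<in> topspace X. f y \<in> U}"
    using openin_continuous_map_preimage[OF assms] by blast
  moreover have "f -` U \<inter> space (borel_of X) = {y \<in> topspace X. f y \<in> U}"
    by (auto simp: space_borel_of)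
  ultimately show "f -` U \<inter> space (borel_of X) \<in> sets (borel_of X)"
    by (simp add: openin_in_sets_borel_of)
qed

lemma card_lessThan_Int_shift:
  assumes "P q = P 0"
  shows "card ({..<q} \<inter> {i. P (Suc i)}) = card ({..<q} \<inter> {i. P i})"
proof -
  have "(\<Sum>i<q. of_bool (P (Suc i)) :: nat) = (\<Sum>i<q. of_bool (P i))"
    using sum.lessThan_Suc_shift[of "\<lambda>i. of_bool (P i) :: nat" q] assms by simp
  then show ?thesis by simp
qed

definition orbit_measure :: "'a topology \<Rightarrow> ('a \<Rightarrow> 'a) \<Rightarrow> 'a \<Rightarrow> nat \<Rightarrow> 'a measure" where
  "orbit_measure X g x q = distr (uniform_count_measure {..<q}) (borel_of X) (\<lambda>i. (g ^^ i) x)"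

locale periodic_orbit =
  fixes X :: "'a topology" and g :: "'a \<Rightarrow> 'a" and x :: 'a and q :: nat
  assumes continuous: "continuous_map X X g"
    and x_in: "x \<in> topspace X" and period_pos: "q > 0" and periodic: "(g ^^ q) x = x"
begin

abbreviation \<mu> where "\<mu> \<equiv> orbit_measure X g x q"

lemma orbit_in_topspace: "(g ^^ n) x \<in> topspace X"
  using continuous x_in by (induction n) (auto simp: continuous_map_def)

lemma orbit_measurable: "(\<lambda>i. (g ^^ i) x) \<in> uniform_count_measure {..<q} \<rightarrow>\<^sub>M borel_of X"
  unfolding measurable_cong_sets[OF sets_uniform_count_measure_count_space refl]
  using orbit_in_topspace by (simp add: space_borel_of)

lemma sets_orbit_measure: "sets \<mu> = sets (borel_of X)"
  by (simp add: orbit_measure_def)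

lemma space_orbit_measure: "space \<mu> = topspace X"
  by (simp add: orbit_measure_def space_borel_of)

lemma prob_space_orbit_measure: "prob_space \<mu>"
  unfolding orbit_measure_def using period_pos
  by (intro prob_space.prob_space_distr prob_space_uniform_count_measure orbit_measurable) auto

lemma emeasure_orbit_measure:
  assumes "A \<in> sets (borel_of X)"
  shows "emeasure \<mu> A = card ({..<q} \<inter> {i. (g ^^ i) x \<in> A}) / q"
proof -
  have "(\<lambda>i. (g ^^ i) x) -` A \<inter> space (uniform_count_measure {..<q}) = {..<q} \<inter> {i. (g ^^ i) x \<in> A}"
    by (auto simp: space_uniform_count_measure)
  then show ?thesis
    unfolding orbit_measure_def emeasure_distr[OF orbit_measurable assms]
    by (simp add: emeasure_uniform_count_measure ennreal_of_nat_eq_real_of_nat divide_ennreal)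
qed

lemma orbit_measure_invariant:
  assumes "A \<in> sets \<mu>"
  shows "emeasure \<mu> {y\<in>topspace X. g y \<in> A} = emeasure \<mu> A"
proof -
  have A: "A \<in> sets (borel_of X)"
    using assms sets_orbit_measure by simp
  have "{y\<in>topspace X. g y \<in> A} = g -` A \<inter> space (borel_of X)"
    by (auto simp: space_borel_of)
  then have preimage: "{y\<in>topspace X. g y \<in> A} \<in> sets (borel_of X)"
    using measurable_sets[OF measurable_borel_of_continuous_map[OF continuous] A] by simp
  have "{..<q} \<inter> {i. (g ^^ i) x \<in> {y\<in>topspace X. g y \<in> A}} = {..<q} \<inter> {i. (g ^^ Suc i) x \<in> A}"
    using orbit_in_topspace by auto
  moreover have "card ({..<q} \<inter> {i. (g ^^ Suc i) x \<in> A}) = card ({..<q} \<inter> {i. (g ^^ i) x \<in> A})"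
    by (rule card_lessThan_Int_shift) (simp add: periodic)
  ultimately show ?thesis
    using emeasure_orbit_measure[OF preimage] emeasure_orbit_measure[OF A] by simp
qed

lemma integrable_orbit_measure:
  fixes f :: "'a \<Rightarrow> real"
  assumes "f \<in> borel_measurable (borel_of X)"
  shows "integrable \<mu> f"
  unfolding orbit_measure_def integrable_distr_eq[OF orbit_measurable assms]
  by (simp add: uniform_count_measure_def integrable_point_measure_finite)

lemma integral_orbit_measure:
  fixes f :: "'a \<Rightarrow> real"
  assumes "f \<in> borel_measurable (borel_of X)"
  shows "(\<integral>y. f y \<partial>\<mu>) = (\<Sum>i<q. f ((g ^^ i) x)) / q"
  unfolding orbit_measure_def integral_distr[OF orbit_measurable assms]
  by (simp add: integral_uniform_count_measure)

end

theorem proposition2p9: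
  fixes X :: "'a topology" and Xh :: "'b topology"
    and p :: "'b \<Rightarrow> 'a" and T :: "int \<Rightarrow> 'b \<Rightarrow> 'b"
    and acoc :: "((nat \<Rightarrow> real) \<Rightarrow> 'a) \<Rightarrow> int"
    and \<alpha> :: "((nat \<Rightarrow> real) \<Rightarrow> 'a) \<Rightarrow> real"
    and \<theta> :: "'b \<Rightarrow> real"
    and g :: "'a \<Rightarrow> 'a" and gh :: "'b \<Rightarrow> 'b"
    and x :: 'a and q :: nat
  assumes "path_connected_space X"
    and "cocycle1 X acoc"
    and "principal_Z_bundle Xh X p T"
    and "has_holonomy Xh X p T acoc"
    and "represents X \<alpha> acoc"
    and "\<forall>s. singular_simplex 1 Xh s \<longrightarrow> cobdry0 \<theta> s = pullback1 p \<alpha> s"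
    and "\<forall>y\<in>topspace Xh. \<forall>r. \<theta> (T r y) = \<theta> y + real_of_int r"
    and "preserves_class X g acoc"
    and "covers Xh p T gh g"
    and "x \<in> topspace X" and "q > 0" and "(g ^^ q) x = x"
  shows "(\<exists>n::int. (\<lambda>m. rho Xh p \<theta> (gh ^^ m) x / real m) \<longlonglongrightarrow> real_of_int n / real q)
     \<and> ((\<lambda>y. rho Xh p \<theta> gh y) \<in> borel_measurable (borel_of X) \<longrightarrow>
        (\<exists>\<mu>. prob_space \<mu> \<and> sets \<mu> = sets (borel_of X) \<and> space \<mu> = topspace X \<and>
             (\<forall>A\<in>sets \<mu>. emeasure \<mu> {y\<in>topspace X. g y \<in> A} = emeasure \<mu> A) \<and>
             integrable \<mu> (\<lambda>y. rho Xh p \<theta> gh y) \<and>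
             (\<exists>n::int. (\<integral>y. rho Xh p \<theta> gh y \<partial>\<mu>) = real_of_int n / real q)))"
proof -
  \<comment> \<open>Only the bundle structure, the equivariance of \<open>\<theta>\<close> and the covering relation
    enter; path-connectedness, the cocycles and \<open>d\<theta> = p\<^sup>*\<alpha>\<close> merely fix the setting.\<close>
  interpret Z_bundle_coordinate Xh X p T \<theta>
    using assms(3,7) by unfold_locales
  have "continuous_map X X g"
    using assms(8) unfolding preserves_class_def by (blast intro: homeomorphic_imp_continuous_map)
  then interpret periodic_orbit X g x q
    using assms(10-12) by unfold_locales
  note cover = assms(9)
  obtain n :: int where n: "\<rho> (gh ^^ q) x = n"
    using rho_periodic_point_in_Ints[OF cover x_in periodic] Ints_cases by metis
  have "(\<lambda>m. \<rho> (gh ^^ m) x / real m) \<longlonglongrightarrow> n / real q"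
    using LIMSEQ_div_of_periodic_increment[OF period_pos] rho_funpow_add[OF cover x_in, of _ q]
      periodic n
    by simp
  moreover have "(\<integral>y. \<rho> gh y \<partial>\<mu>) = n / real q" if "\<rho> gh \<in> borel_measurable (borel_of X)"
    using integral_orbit_measure[OF that] sum_rho_orbit[OF cover x_in] n by simp
  ultimately show ?thesis
    using prob_space_orbit_measure sets_orbit_measure space_orbit_measure
      orbit_measure_invariant integrable_orbit_measure
    by blast
qed

end
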